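(* Let $n\ge3$, $-2<l<0$, $1<p\le p_*=\frac{n+2+2l}{n-2}$, and let $f$ satisfy $(f_1)$, $(f_2)$, $(f_2')$. Assume there exist positive numbers $r_0,C_1$ such that $f(r)\ge C_1 r^{l}$ for $r>r_0$. Then there exists a constant $C>0$, independent of $\alpha$, such that whenever $u(r;\alpha)$ (for any $0<\alpha<\infty$) is a positive entire solution (i.e. $u(r;\alpha)>0$ for all $r\ge0$), it satisfies $u(r;\alpha)\le C r^{\frac{2-n}{2}}$ for all $r\ge r_0$.
   Context: Standing hypotheses: $(f_1)$ $f\in C(0,\infty)$, $f(r)>0$ for $r>0$; $(f_2)$ $f(r)=O(r^l)$ as $r\to\infty$; $(f_2')$ $f(r)=O(r^\sigma)$ as $r\to0$, $\sigma>-2$. For $\alpha>0$, $u(r;\alpha)$ is the unique solution of (1.4) $u''+\frac{n-1}{r}u'+f(r)(u^+)^p=0$, $u(0;\alpha)=\alpha$, $u'(0;\alpha)=0$, $u^+=\max\{u,0\}$; it corresponds to the radial solution $u(|x|)$ of $-\Delta u=f(|x|)u^p$ on $\mathbb R^n$. *)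

theory Defs
  imports "HOL-Analysis.Analysis" "HOL-Library.Landau_Symbols"
begin

definition radial_sol :: "nat \<Rightarrow> (real \<Rightarrow> real) \<Rightarrow> real \<Rightarrow> real \<Rightarrow> (real \<Rightarrow> real) \<Rightarrow> bool" where
  "radial_sol n f p \<alpha> u \<longleftrightarrow>
     continuous_on {0..} u \<and> u 0 = \<alpha> \<and>
     (u has_real_derivative 0) (at 0 within {0..}) \<and>
     (\<exists>u'. \<forall>r>0. (u has_real_derivative u' r) (at r) \<and>
        (u' has_real_derivative (- ((real n - 1) / r) * u' r - f r * (max (u r) 0) powr p)) (at r))"

end

theory Submission
  imports Defs
begin

text \<open>
  The flux g(r) = r^(n-1) u'(r) satisfies g' = -r^(n-1) f u^p \<le> 0, so together with u'(0) = 0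
  it is nonpositive and nonincreasing. This yields two estimates of -g(r). Since
  u'(s) \<le> g(r) s^(1-n) for s \<ge> r and u stays positive, integrating up to infinity gives
  -g(r) r^(2-n) \<le> (n-2) u(r). For r \<ge> r0, integrating g' over [r/2, r], where u \<ge> u(r) and
  f(s) \<ge> c s^l (from the tail bound and the continuity and positivity of f), gives -g(r) \<ge> c (r/2)^(n+l) u(r)^p. Hence u(r)^(p-1) is at most a constant times r^-(2+l),
  and p \<le> p_* says exactly that (2+l)/(p-1) \<ge> (n-2)/2.
\<close>

lemma radial_flux_has_derivative:
  fixes u' :: "real \<Rightarrow> real" and n s F :: real
  assumes s: "s > 0"
    and du': "(u' has_real_derivative (- ((n - 1) / s) * u' s - F)) (at s)"
  shows "((\<lambda>s. s powr (n - 1) * u' s) has_real_derivative - (s powr (n - 1) * F)) (at s)"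
proof -
  have "((\<lambda>s. s powr (n - 1) * u' s) has_real_derivative
      (n - 1) * s powr (n - 1 - 1) * u' s + (- ((n - 1) / s) * u' s - F) * s powr (n - 1)) (at s)"
    using has_real_derivative_powr[OF s, of "n - 1"] du' by (rule DERIV_mult)
  then show ?thesis
  proof (rule DERIV_cong)
    have "s powr (n - 1 - 1) = s powr (n - 1) / s"
      using s powr_diff[of s "n - 1" 1] by simp
    then show "(n - 1) * s powr (n - 1 - 1) * u' s + (- ((n - 1) / s) * u' s - F) * s powr (n - 1)
        = - (s powr (n - 1) * F)"
      by (simp add: algebra_simps)
  qed
qed

lemma deriv_nonpos_of_flux_antimono:
  fixes u u' :: "real \<Rightarrow> real" and m :: real
  assumes d0: "(u has_real_derivative 0) (at 0 within {0..})"
    and cont: "continuous_on {0..} u"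
    and du: "\<forall>r>0. (u has_real_derivative u' r) (at r)"
    and flux: "\<And>x y. 0 < x \<Longrightarrow> x \<le> y \<Longrightarrow> y powr m * u' y \<le> x powr m * u' x"
    and m: "m \<ge> 0" and a: "a > 0"
  shows "u' a \<le> 0"
proof (rule ccontr)
  assume "\<not> u' a \<le> 0"
  then have ua: "u' a > 0" by simp
  have u'_ge: "u' a \<le> u' x" if "0 < x" "x \<le> a" for x
  proof -
    have "x powr m * u' a \<le> a powr m * u' a"
      using that ua m by (intro mult_right_mono powr_mono2) auto
    also have "\<dots> \<le> x powr m * u' x"
      using flux that by blast
    finally show ?thesis
      using that by (simp add: mult_le_cancel_left)
  qed
  have quot_ge: "u' a \<le> (u y - u 0) / (y - 0)" if "0 < y" "y \<le> a" for y
  proof -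
    have "continuous_on {0..y} u"
      using cont by (rule continuous_on_subset) auto
    moreover have "u differentiable (at x)" if "0 < x" for x
      using du that real_differentiable_def by blast
    ultimately obtain l z where z: "0 < z" "z < y" "(u has_real_derivative l) (at z)"
        "u y - u 0 = (y - 0) * l"
      using MVT[of 0 y u] \<open>0 < y\<close> by auto
    then have "l = u' z"
      using du DERIV_unique by blast
    then show ?thesis
      using z u'_ge[of z] that by simp
  qed
  have "((\<lambda>y. (u y - u 0) / (y - 0)) \<longlongrightarrow> 0) (at_right 0)"
    using d0 by (simp add: has_field_derivative_iff at_within_Ici_at_right)
  moreover have "\<forall>\<^sub>F y in at_right 0. u' a \<le> (u y - u 0) / (y - 0)"
    using quot_ge a by (auto simp: eventually_at_right intro!: exI[of _ a])
  ultimately have "u' a \<le> 0"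
    by (rule tendsto_lowerbound) simp
  then show False using ua by simp
qed

lemma neg_flux_bound_le_of_pos:
  fixes u u' :: "real \<Rightarrow> real" and n G r :: real
  assumes n: "n > 2" and r: "r > 0"
    and du: "\<forall>s\<ge>r. (u has_real_derivative u' s) (at s)"
    and pos: "\<forall>s\<ge>r. u s > 0"
    and flux: "\<forall>s\<ge>r. s powr (n - 1) * u' s \<le> G"
  shows "- G * r powr (2 - n) \<le> (n - 2) * u r"
proof -
  define k where "k s = u s + G * s powr (2 - n) / (n - 2)" for s
  have k_deriv: "(k has_real_derivative u' s - G * s powr (1 - n)) (at s)" if "s \<ge> r" for s
  proof -
    have s: "s > 0" using that r by simp
    have "(k has_real_derivative u' s + G * ((2 - n) * s powr (2 - n - 1)) / (n - 2)) (at s)"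
      unfolding k_def using du that
      by (intro DERIV_add DERIV_cdivide DERIV_cmult has_real_derivative_powr s) auto
    then show ?thesis
      by (rule DERIV_cong) (use n in \<open>simp add: field_simps\<close>)
  qed
  have k_deriv_nonpos: "u' s - G * s powr (1 - n) \<le> 0" if "s \<ge> r" for s
  proof -
    have s: "s > 0" using that r by simp
    have "u' s = s powr (1 - n) * (s powr (n - 1) * u' s)"
      using s by (simp add: powr_add[symmetric])
    also have "\<dots> \<le> s powr (1 - n) * G"
      using flux that by (intro mult_left_mono) auto
    finally show ?thesis by (simp add: mult.commute)
  qed
  have k_le: "k s \<le> k r" if "s \<ge> r" for s
  proof (rule DERIV_nonpos_imp_nonincreasing[OF that])
    fix x assume "r \<le> x"
    then show "\<exists>y. (k has_real_derivative y) (at x) \<and> y \<le> 0"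
      using k_deriv k_deriv_nonpos by blast
  qed
  have "((\<lambda>s. G * s powr (2 - n) / (n - 2)) \<longlongrightarrow> G * 0 / (n - 2)) at_top"
    using n by (intro tendsto_intros tendsto_neg_powr filterlim_ident) auto
  moreover have "\<forall>\<^sub>F s in at_top. G * s powr (2 - n) / (n - 2) \<le> k r"
    using eventually_ge_at_top[of r]
  proof eventually_elim
    case (elim s)
    then have "G * s powr (2 - n) / (n - 2) < k s"
      using pos unfolding k_def by simp
    then show ?case
      using k_le[OF elim] by simp
  qed
  ultimately have "0 \<le> k r"
    by (intro tendsto_upperbound) auto
  then show ?thesis
    using n unfolding k_def by (simp add: field_simps)
qed

lemma neg_flux_lower_bound:
  fixes u u' f :: "real \<Rightarrow> real" and n l p c r :: real
  assumes r: "r > 0" and c: "c \<ge> 0" and p: "p \<ge> 0" and nl: "n - 1 + l \<ge> 0"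
    and du: "\<forall>s>0. (u has_real_derivative u' s) (at s)"
    and u'_nonpos: "\<forall>s>0. u' s \<le> 0"
    and pos: "\<forall>s>0. u s > 0"
    and dflux: "\<forall>s>0. ((\<lambda>s. s powr (n - 1) * u' s) has_real_derivative
                  - (s powr (n - 1) * (f s * u s powr p))) (at s)"
    and fc: "\<forall>s\<in>{r/2..r}. c * s powr l \<le> f s"
  shows "c * (r / 2) powr (n + l) * u r powr p \<le> - (r powr (n - 1) * u' r)"
proof -
  have "\<exists>z>r / 2. z < r \<and> r powr (n - 1) * u' r - (r / 2) powr (n - 1) * u' (r / 2)
      = (r - r / 2) * - (z powr (n - 1) * (f z * u z powr p))"
    by (rule MVT2) (use r dflux in auto)
  then obtain z where z: "r / 2 < z" "z < r"
    and mvt: "r powr (n - 1) * u' r - (r / 2) powr (n - 1) * u' (r / 2)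
              = (r - r / 2) * - (z powr (n - 1) * (f z * u z powr p))"
    by blast
  have "u r \<le> u z"
  proof (rule DERIV_nonpos_imp_nonincreasing[of z r])
    fix x assume "z \<le> x"
    then have "x > 0"
      using z r by linarith
    then show "\<exists>y. (u has_real_derivative y) (at x) \<and> y \<le> 0"
      using du u'_nonpos by blast
  qed (use z in simp)
  then have "u r powr p \<le> u z powr p"
    using pos r p by (intro powr_mono2) auto
  moreover have "(r / 2) powr (n - 1 + l) \<le> z powr (n - 1) * z powr l"
    using z r nl by (simp add: powr_add[symmetric] powr_mono2)
  moreover have "c * z powr l \<le> f z"
    using fc z by auto
  ultimately have "(r / 2) powr (n - 1 + l) * (c * u r powr p)
      \<le> z powr (n - 1) * z powr l * (c * u z powr p)"
    using c by (intro mult_mono) auto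
  also have "\<dots> = z powr (n - 1) * ((c * z powr l) * u z powr p)"
    by (simp add: mult_ac)
  also have "\<dots> \<le> z powr (n - 1) * (f z * u z powr p)"
    using \<open>c * z powr l \<le> f z\<close> by (intro mult_left_mono mult_right_mono) auto
  finally have source: "c * (r / 2) powr (n - 1 + l) * u r powr p \<le> z powr (n - 1) * (f z * u z powr p)"
    by (simp add: mult_ac)
  have "(r / 2) powr (n - 1) * u' (r / 2) \<le> 0"
    using u'_nonpos r by (simp add: mult_nonneg_nonpos)
  then have "(r / 2) * (z powr (n - 1) * (f z * u z powr p)) \<le> - (r powr (n - 1) * u' r)"
    using mvt by (simp add: algebra_simps)
  moreover have "(r / 2) * (r / 2) powr (n - 1 + l) = (r / 2) powr (n + l)"
    using r powr_add[of "r / 2" 1 "n - 1 + l"] by simp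
  moreover have "(r / 2) * (c * (r / 2) powr (n - 1 + l) * u r powr p)
      \<le> (r / 2) * (z powr (n - 1) * (f z * u z powr p))"
    using source r by (intro mult_left_mono) auto
  ultimately show ?thesis
    by (simp add: mult_ac)
qed

lemma le_powr_of_superlinear_bound:
  fixes U k A p :: real
  assumes U: "U > 0" and k: "k > 0" and p: "p > 1" and bound: "k * U powr p \<le> A * U"
  shows "U \<le> (A / k) powr (1 / (p - 1))"
proof -
  have "U powr p = U powr (p - 1) * U"
    using U by (simp add: powr_diff)
  then have "U powr (p - 1) \<le> A / k"
    using bound U k by (simp add: field_simps)
  then have "(U powr (p - 1)) powr (1 / (p - 1)) \<le> (A / k) powr (1 / (p - 1))"
    using p by (intro powr_mono2) auto
  then show ?thesis
    using U p by (simp add: powr_powr)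
qed

lemma powr_le_scaled_powr:
  fixes r r0 a b :: real
  assumes "0 < r0" "r0 \<le> r" "a \<le> b"
  shows "r powr a \<le> r0 powr (a - b) * r powr b"
proof -
  have "r powr (a - b) \<le> r0 powr (a - b)"
    using assms by (intro powr_mono2') auto
  then have "r powr (a - b) * r powr b \<le> r0 powr (a - b) * r powr b"
    by (intro mult_right_mono) auto
  then show ?thesis
    by (simp add: powr_add[symmetric])
qed

lemma continuous_pos_ge_powr_on_atLeast:
  fixes f :: "real \<Rightarrow> real" and l r0 C1 a :: real
  assumes cont: "continuous_on {0<..} f" and pos: "\<forall>r>0. f r > 0"
    and l: "l \<le> 0" and a: "a > 0" and C1: "C1 > 0"
    and tail: "\<forall>r>r0. C1 * r powr l \<le> f r"
  shows "\<exists>c>0. \<forall>s\<ge>a. c * s powr l \<le> f s"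
proof -
  have "continuous_on {a..max a r0} f"
    using cont by (rule continuous_on_subset) (use a in auto)
  then obtain x0 where x0: "x0 \<in> {a..max a r0}" and x0_min: "\<forall>y\<in>{a..max a r0}. f x0 \<le> f y"
    using continuous_attains_inf[of "{a..max a r0}" f] by auto
  define c where "c = min C1 (f x0 / a powr l)"
  have c: "c > 0"
    unfolding c_def using C1 a x0 pos by simp
  have "c * s powr l \<le> f s" if s: "s \<ge> a" for s
  proof (cases "s > r0")
    case True
    have "c * s powr l \<le> C1 * s powr l"
      unfolding c_def by (intro mult_right_mono) auto
    then show ?thesis
      using tail True by force
  next
    case False
    have "c * s powr l \<le> c * a powr l"
      using s a l c by (intro mult_left_mono powr_mono2') auto
    also have "\<dots> \<le> f x0 / a powr l * a powr l"
      unfolding c_def by (intro mult_right_mono) auto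
    also have "\<dots> \<le> f s"
      using a x0_min s False by simp
    finally show ?thesis .
  qed
  then show ?thesis
    using c by blast
qed

lemma positive_radial_sol_superlinear_estimate:
  fixes n :: nat and f u :: "real \<Rightarrow> real" and l p c \<alpha> r :: real
  assumes n: "n \<ge> 3" and l: "-2 < l" and p: "p \<ge> 0"
    and f_nonneg: "\<forall>r>0. f r \<ge> 0"
    and sol: "radial_sol n f p \<alpha> u" and u_pos: "\<forall>r\<ge>0. u r > 0"
    and r: "r > 0" and c: "c \<ge> 0" and fc: "\<forall>s\<in>{r/2..r}. c * s powr l \<le> f s"
  shows "c * (r / 2) powr (real n + l) * u r powr p * r powr (2 - real n) \<le> (real n - 2) * u r"
proof -
  obtain u' where du: "\<forall>s>0. (u has_real_derivative u' s) (at s)"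
    and du': "\<forall>s>0. (u' has_real_derivative
                 (- ((real n - 1) / s) * u' s - f s * (max (u s) 0) powr p)) (at s)"
    using sol unfolding radial_sol_def by blast
  have dflux: "\<forall>s>0. ((\<lambda>s. s powr (real n - 1) * u' s) has_real_derivative
                 - (s powr (real n - 1) * (f s * u s powr p))) (at s)"
  proof (intro allI impI)
    fix s :: real assume s: "s > 0"
    then have "max (u s) 0 = u s"
      using u_pos by simp
    then show "((\<lambda>s. s powr (real n - 1) * u' s) has_real_derivative
        - (s powr (real n - 1) * (f s * u s powr p))) (at s)"
      using radial_flux_has_derivative[OF s] du'[rule_format, OF s] by simp
  qed
  have flux_antimono: "y powr (real n - 1) * u' y \<le> x powr (real n - 1) * u' x"
    if "0 < x" "x \<le> y" for x y
  proof (rule DERIV_nonpos_imp_nonincreasing[OF \<open>x \<le> y\<close>])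
    fix s assume "x \<le> s"
    then have "s > 0" using that by linarith
    then show "\<exists>d. ((\<lambda>s. s powr (real n - 1) * u' s) has_real_derivative d) (at s) \<and> d \<le> 0"
      using dflux f_nonneg by (intro exI conjI) auto
  qed
  have u'_nonpos: "\<forall>s>0. u' s \<le> 0"
  proof (intro allI impI)
    fix s :: real assume "s > 0"
    moreover have "(u has_real_derivative 0) (at 0 within {0..})" "continuous_on {0..} u"
      using sol unfolding radial_sol_def by auto
    ultimately show "u' s \<le> 0"
      using deriv_nonpos_of_flux_antimono[of u u' "real n - 1" s] du flux_antimono n by simp
  qed
  have "c * (r / 2) powr (real n + l) * u r powr p \<le> - (r powr (real n - 1) * u' r)"
  proof (rule neg_flux_lower_bound[OF r c p _ du u'_nonpos _ dflux fc])
    show "real n - 1 + l \<ge> 0"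
      using n l by simp
    show "\<forall>s>0. u s > 0"
      using u_pos by simp
  qed
  then have "c * (r / 2) powr (real n + l) * u r powr p * r powr (2 - real n)
      \<le> - (r powr (real n - 1) * u' r) * r powr (2 - real n)"
    by (rule mult_right_mono) simp
  also have "\<dots> \<le> (real n - 2) * u r"
  proof (rule neg_flux_bound_le_of_pos[OF _ r])
    show "real n > 2"
      using n by simp
    show "\<forall>s\<ge>r. (u has_real_derivative u' s) (at s)" "\<forall>s\<ge>r. u s > 0"
      using du u_pos r by simp_all
    show "\<forall>s\<ge>r. s powr (real n - 1) * u' s \<le> r powr (real n - 1) * u' r"
      using flux_antimono r by simp
  qed
  finally show ?thesis .
qed

lemma decay_of_superlinear_estimate:
  fixes n :: nat and U l p c r0 r :: real
  assumes n: "n \<ge> 3" and p: "1 < p"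
    and p_crit: "p \<le> (real n + 2 + 2 * l) / (real n - 2)"
    and U: "U > 0" and c: "c > 0" and r0: "r0 > 0" and r: "r \<ge> r0"
    and key: "c * (r / 2) powr (real n + l) * U powr p * r powr (2 - real n) \<le> (real n - 2) * U"
  shows "U \<le> ((real n - 2) * 2 powr (real n + l) / c) powr (1 / (p - 1))
              * r0 powr (- (2 + l) / (p - 1) - (2 - real n) / 2) * r powr ((2 - real n) / 2)"
proof -
  define K where "K = (real n - 2) * 2 powr (real n + l) / c"
  have K: "K > 0"
    unfolding K_def using n c by simp
  have "(r / 2) powr (real n + l) * r powr (2 - real n) = r powr (2 + l) / 2 powr (real n + l)"
    using r0 r by (simp add: powr_divide powr_add[symmetric] add.commute)
  then have "(c * r powr (2 + l) / 2 powr (real n + l)) * U powr p \<le> (real n - 2) * U"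
    using key by (simp add: mult_ac)
  moreover have "(real n - 2) / (c * r powr (2 + l) / 2 powr (real n + l)) = K * r powr - (2 + l)"
    using powr_minus_divide[of r "2 + l"] c unfolding K_def by simp
  ultimately have "U \<le> (K * r powr - (2 + l)) powr (1 / (p - 1))"
    using le_powr_of_superlinear_bound[of U "c * r powr (2 + l) / 2 powr (real n + l)" p "real n - 2"]
      U c r0 r p by auto
  also have "\<dots> = K powr (1 / (p - 1)) * r powr (- (2 + l) / (p - 1))"
    using K powr_mult[of K "r powr - (2 + l)"] by (simp add: powr_powr)
  also have "\<dots> \<le> K powr (1 / (p - 1)) * (r0 powr (- (2 + l) / (p - 1) - (2 - real n) / 2)
                  * r powr ((2 - real n) / 2))"
  proof (intro mult_left_mono powr_le_scaled_powr)
    have "(p - 1) * (real n - 2) \<le> 2 * (2 + l)"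
      using p_crit n by (simp add: pos_le_divide_eq algebra_simps)
    then show "- (2 + l) / (p - 1) \<le> (2 - real n) / 2"
      using p by (simp add: field_simps)
  qed (use r0 r in auto)
  finally show ?thesis
    unfolding K_def by (simp add: mult_ac)
qed

theorem lemma4p2:
  fixes n :: nat and l p r0 C1 :: real and f :: "real \<Rightarrow> real"
  assumes "n \<ge> 3" and "-2 < l" and "l < 0"
    and "1 < p" and "p \<le> (real n + 2 + 2 * l) / (real n - 2)"
    and f1: "continuous_on {0<..} f" "\<forall>r>0. f r > 0"
    and f2: "f \<in> O[at_top](\<lambda>r. r powr l)"
    and f2': "\<exists>\<sigma>>-2. f \<in> O[at_right 0](\<lambda>r. r powr \<sigma>)"
    and "r0 > 0" and "C1 > 0" and "\<forall>r>r0. f r \<ge> C1 * r powr l"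
  shows "\<exists>C>0. \<forall>\<alpha>>0. \<forall>u. radial_sol n f p \<alpha> u \<and> (\<forall>r\<ge>0. u r > 0) \<longrightarrow>
           (\<forall>r\<ge>r0. u r \<le> C * r powr ((2 - real n) / 2))"
proof -
  obtain c where c: "c > 0" and fc: "\<forall>s\<ge>r0 / 2. c * s powr l \<le> f s"
    using continuous_pos_ge_powr_on_atLeast[OF f1, of l "r0 / 2" C1 r0] assms by auto
  define C where "C = ((real n - 2) * 2 powr (real n + l) / c) powr (1 / (p - 1))
                      * r0 powr (- (2 + l) / (p - 1) - (2 - real n) / 2)"
  have "C > 0"
    unfolding C_def using \<open>n \<ge> 3\<close> c \<open>r0 > 0\<close> by simp
  moreover have "u r \<le> C * r powr ((2 - real n) / 2)"
    if sol: "radial_sol n f p \<alpha> u" and u_pos: "\<forall>r\<ge>0. u r > 0" and r: "r \<ge> r0" for \<alpha> u r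
    unfolding C_def
  proof (rule decay_of_superlinear_estimate[OF \<open>n \<ge> 3\<close> \<open>1 < p\<close> \<open>p \<le> _\<close> _ c \<open>r0 > 0\<close> r])
    show "u r > 0"
      using u_pos r \<open>r0 > 0\<close> by simp
    show "c * (r / 2) powr (real n + l) * u r powr p * r powr (2 - real n) \<le> (real n - 2) * u r"
      using \<open>n \<ge> 3\<close> \<open>-2 < l\<close> \<open>1 < p\<close> f1(2) sol u_pos r \<open>r0 > 0\<close> c fc
      by (intro positive_radial_sol_superlinear_estimate) auto
  qed
  ultimately show ?thesis
    by blast
qed

end
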